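(* Let $r\in(0,1/2)$ and consider the asynchronous space-time-coded scheme described in the context. Assume the waveform $s$ is supported in $[0,2T_s]$, the relative delay is $\tau\in(0,T_s)$, and the linear-independence condition holds with $M=2$. Then $$d_{A\text{-}stc}(r):=\lim_{\mathrm{SNR}\to\infty}-\frac{\log\Pr[I_{A\text{-}stc}<R(\mathrm{SNR})]}{\log\mathrm{SNR}}=3(1-2r),$$ which is the same as the tradeoff of the synchronous space-time-coded scheme.
   Context: Network: a source $N_S$, two relays $N_{R_1},N_{R_2}$ and a destination $N_D$. The gains $\alpha_{i,j}$, $i\in\{S,R_1,R_2\}$, $j\in\{R_1,R_2,D\}$, $i\neq j$, are mutually independent zero-mean circularly symmetric complex Gaussian random variables with variances $\sigma^2_{i,j}>0$. For $\mathrm{SNR}>0$ set $\rho_0=\frac23\mathrm{SNR}$. The target rate is $R=R(\mathrm{SNR})=r\log_2(1+\mathrm{SNR}\,\sigma^2_{S,D})$ and all mutual informations are in bits. Relay $R_k$ belongs to the decoding set $\mathcal D(s)$ iff $\frac12\log_2(1+\rho_0|\alpha_{S,R_k}|^2)\ge R$. Waveform: $s$ is real-valued with $s(t)=0$ for $t\notin[0,MT_s]$ and $\int s^2=1$. Fix $\tau\in(0,T_s)$. - Let $S(t)=[s(t),s(t-\tau)]^T$, $G(k)=\int S(t)S(t-kT_s)^Tdt$, and $\tilde T(\omega)=\sum_{k\in\mathbb Z}G(k)e^{-jk\omega}$, with entries $\tilde T_{11}(\omega),\dots$. Note $\tilde T_{11}=\tilde T_{22}$. - Linear-independence condition: for every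 $\omega\in[-\pi,\pi]$, the functions $F_1(t,\omega)=\sum_{k=0}^M s(t+kT_s)e^{jk\omega}$ and $F_2(t,\omega)=\sum_{k=0}^M s(t-\tau+kT_s)e^{jk\omega}$ are linearly independent over $\mathbb C$ on $t\in[0,T_s]$. Mutual informations: - For a gain $\alpha$, $I_{E\text{-}SD}(\alpha)=\frac1{2\pi}\int_{-\pi}^{\pi}\log_2\left(1+\rho_0|\alpha|^2\tilde T_{11}(\omega)\right)d\omega$. - With $\alpha_1=\alpha_{R_1,D}$ and $\alpha_2=\alpha_{R_2,D}$, $$I_{E\text{-}MacA}=\frac1{2\pi}\int_{-\pi}^{\pi}\log_2\left(1+\rho_0(|\alpha_1|^2+|\alpha_2|^2)\tilde T_{11}(\omega)+\rho_0^2|\alpha_1|^2|\alpha_2|^2\det\tilde T(\omega)\right)d\omega.$$ The end-to-end mutual information $I_{A\text{-}stc}$ is: - $\frac12I_{E\text{-}SD}(\alpha_{S,D})$ if $\mathcal D(s)=\emptyset$; - $\frac12I_{E\text{-}SD}(\alpha_{S,D})+\frac12I_{E\text{-}SD}(\alpha_{R_j,D})$ if $\mathcal D(s)=\{R_j\}$; - $\frac12I_{E\text{-}SD}(\alpha_{S,D})+\frac12I_{E\text{-}MacA}$ if $|\mathcal D(s)|=2$. The probability $\Pr[I_{A\text{-}stc}<R]$ averages over the gains, including the randomness of $\mathcal D(s)$. *)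

theory Defs
  imports "HOL-Probability.Probability"
begin

datatype link = S_R1 | S_R2 | S_D | R1_R2 | R1_D | R2_R1 | R2_D

definition cgauss :: "real \<Rightarrow> complex measure" where
  "cgauss v = density lborel (\<lambda>z. ennreal (exp (- (cmod z)\<^sup>2 / v) / (pi * v)))"

definition gains_measure :: "(link \<Rightarrow> real) \<Rightarrow> (link \<Rightarrow> complex) measure" where
  "gains_measure \<sigma>2 = PiM UNIV (\<lambda>l. cgauss (\<sigma>2 l))"

text \<open>Components of S(t) = [s(t), s(t - tau)]^T, indexed by 0 and 1.\<close>
definition Scomp :: "(real \<Rightarrow> real) \<Rightarrow> real \<Rightarrow> nat \<Rightarrow> real \<Rightarrow> real" where
  "Scomp s \<tau> i t = (if i = 0 then s t else s (t - \<tau>))"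

definition Gmat :: "(real \<Rightarrow> real) \<Rightarrow> real \<Rightarrow> real \<Rightarrow> int \<Rightarrow> nat \<Rightarrow> nat \<Rightarrow> real" where
  "Gmat s Ts \<tau> k i j = (LINT t|lborel. Scomp s \<tau> i t * Scomp s \<tau> j (t - real_of_int k * Ts))"

definition Tmat :: "(real \<Rightarrow> real) \<Rightarrow> real \<Rightarrow> real \<Rightarrow> real \<Rightarrow> nat \<Rightarrow> nat \<Rightarrow> complex" where
  "Tmat s Ts \<tau> \<omega> i j = (\<Sum>\<^sub>\<infinity>k\<in>(UNIV::int set). complex_of_real (Gmat s Ts \<tau> k i j) * cis (- (real_of_int k * \<omega>)))"

definition detT :: "(real \<Rightarrow> real) \<Rightarrow> real \<Rightarrow> real \<Rightarrow> real \<Rightarrow> complex" where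
  "detT s Ts \<tau> \<omega> = Tmat s Ts \<tau> \<omega> 0 0 * Tmat s Ts \<tau> \<omega> 1 1 - Tmat s Ts \<tau> \<omega> 0 1 * Tmat s Ts \<tau> \<omega> 1 0"

text \<open>Linear-independence condition (functions on [0,T_s], as elements of L^2, i.e. a.e.).\<close>
definition Fw :: "(real \<Rightarrow> real) \<Rightarrow> real \<Rightarrow> nat \<Rightarrow> real \<Rightarrow> real \<Rightarrow> real \<Rightarrow> complex" where
  "Fw s Ts M d t \<omega> = (\<Sum>k=0..M. complex_of_real (s (t - d + real k * Ts)) * cis (real k * \<omega>))"

definition lin_indep_cond :: "(real \<Rightarrow> real) \<Rightarrow> real \<Rightarrow> real \<Rightarrow> nat \<Rightarrow> bool" where
  "lin_indep_cond s Ts \<tau> M \<longleftrightarrow>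
     (\<forall>\<omega>\<in>{-pi..pi}. \<forall>c1 c2 :: complex.
        (AE t in lborel. t \<in> {0..Ts} \<longrightarrow> c1 * Fw s Ts M 0 t \<omega> + c2 * Fw s Ts M \<tau> t \<omega> = 0)
        \<longrightarrow> c1 = 0 \<and> c2 = 0)"

definition rho0 :: "real \<Rightarrow> real" where
  "rho0 SNR = 2 / 3 * SNR"

definition rate :: "(link \<Rightarrow> real) \<Rightarrow> real \<Rightarrow> real \<Rightarrow> real" where
  "rate \<sigma>2 r SNR = r * log 2 (1 + SNR * \<sigma>2 S_D)"

text \<open>T~_11 and det T~ are real (T~ is Hermitian); we take real parts.\<close>
definition I_ESD :: "(real \<Rightarrow> real) \<Rightarrow> real \<Rightarrow> real \<Rightarrow> real \<Rightarrow> complex \<Rightarrow> real" where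
  "I_ESD s Ts \<tau> \<rho> a = 1 / (2 * pi) *
     (\<integral>\<omega>\<in>{-pi..pi}. log 2 (1 + \<rho> * (cmod a)\<^sup>2 * Re (Tmat s Ts \<tau> \<omega> 0 0)) \<partial>lborel)"

definition I_EMacA :: "(real \<Rightarrow> real) \<Rightarrow> real \<Rightarrow> real \<Rightarrow> real \<Rightarrow> complex \<Rightarrow> complex \<Rightarrow> real" where
  "I_EMacA s Ts \<tau> \<rho> a1 a2 = 1 / (2 * pi) *
     (\<integral>\<omega>\<in>{-pi..pi}. log 2 (1 + \<rho> * ((cmod a1)\<^sup>2 + (cmod a2)\<^sup>2) * Re (Tmat s Ts \<tau> \<omega> 0 0)
        + \<rho>\<^sup>2 * (cmod a1)\<^sup>2 * (cmod a2)\<^sup>2 * Re (detT s Ts \<tau> \<omega>)) \<partial>lborel)"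

definition decodes :: "real \<Rightarrow> real \<Rightarrow> complex \<Rightarrow> bool" where
  "decodes \<rho> R a \<longleftrightarrow> 1 / 2 * log 2 (1 + \<rho> * (cmod a)\<^sup>2) \<ge> R"

definition I_Astc :: "(real \<Rightarrow> real) \<Rightarrow> real \<Rightarrow> real \<Rightarrow> real \<Rightarrow> real \<Rightarrow> (link \<Rightarrow> complex) \<Rightarrow> real" where
  "I_Astc s Ts \<tau> \<rho> R g =
     (let d1 = decodes \<rho> R (g S_R1); d2 = decodes \<rho> R (g S_R2);
          base = 1 / 2 * I_ESD s Ts \<tau> \<rho> (g S_D) in
      if d1 \<and> d2 then base + 1 / 2 * I_EMacA s Ts \<tau> \<rho> (g R1_D) (g R2_D)
      else if d1 then base + 1 / 2 * I_ESD s Ts \<tau> \<rho> (g R1_D)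
      else if d2 then base + 1 / 2 * I_ESD s Ts \<tau> \<rho> (g R2_D)
      else base)"

definition outage_prob :: "(real \<Rightarrow> real) \<Rightarrow> real \<Rightarrow> real \<Rightarrow> (link \<Rightarrow> real) \<Rightarrow> real \<Rightarrow> real \<Rightarrow> real" where
  "outage_prob s Ts \<tau> \<sigma>2 r SNR =
     measure (gains_measure \<sigma>2)
       {g \<in> space (gains_measure \<sigma>2). I_Astc s Ts \<tau> (rho0 SNR) (rate \<sigma>2 r SNR) g < rate \<sigma>2 r SNR}"

end

theory Submission
  imports Defs "HOL-Real_Asymp.Real_Asymp"
begin

(*
  The idea is to sandwich the outage probability between two constant multiples of t^3,
  where t = (2^(2R) - 1)/rho is the gain threshold below which a link of capacity
  log2(1 + rho |alpha|^2) cannot carry rate 2R.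

  Since s lives on [0, 2 Ts], G(k) = 0 for |k| >= 3, so T~(omega) is a
     trigonometric polynomial in block Gram coefficients, and its Hermitian form is the
     energy of c0 F1 + c1 F2 on one symbol interval.  Unit energy and linear independence
     give T~11 = 1 + beta cos omega with |beta| < 1, and det T~ >= 0.  Hence I_E-SD and
     I_E-MacA are squeezed between capacities of the form log2(1 + c rho |alpha|^2).
  2. Gains.  A complex Gaussian has e^-1 t/v <= Pr[|alpha|^2 < t] <= t/v (t <= v), and by
     independence a box constraining the links in L has probability of order prod t_l.
  3. Outage.  The outage event contains a box constraining the direct and both
     source-relay links, and is contained in the union of four boxes with three
     constrained links each (one per decoding set).
  4. Asymptotics.  t(SNR) decays like SNR^-(1-2r), which yields the exponent 3(1 - 2r).
*)

lemma integrable_shift_iff: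
  fixes f :: "real \<Rightarrow> real"
  shows "integrable lborel (\<lambda>x. f (x + a)) \<longleftrightarrow> integrable lborel f"
  using lborel_integrable_real_affine_iff[of 1 f a] by (simp add: add.commute)

lemma integral_shift:
  fixes f :: "real \<Rightarrow> real"
  shows "(LINT x|lborel. f (x + a)) = (LINT x|lborel. f x)"
  using lborel_integral_real_affine[of 1 f a] by (simp add: add.commute)

text \<open>Expanding the squared modulus of a complex combination of real functions:
  this is how a Gram matrix of real functions turns into a quadratic form.\<close>

lemma cmod_sum_sq_expand:
  fixes f :: "'p \<Rightarrow> real" and a :: "'p \<Rightarrow> complex"
  shows "(cmod (\<Sum>p\<in>P. a p * complex_of_real (f p)))\<^sup>2
     = (\<Sum>p\<in>P. \<Sum>q\<in>P. (Re (a p) * Re (a q) + Im (a p) * Im (a q)) * (f p * f q))"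
proof -
  have "(cmod (\<Sum>p\<in>P. a p * complex_of_real (f p)))\<^sup>2
      = (\<Sum>p\<in>P. Re (a p) * f p)\<^sup>2 + (\<Sum>p\<in>P. Im (a p) * f p)\<^sup>2"
    by (simp add: cmod_power2)
  also have "\<dots> = (\<Sum>p\<in>P. \<Sum>q\<in>P. (Re (a p) * Re (a q) + Im (a p) * Im (a q)) * (f p * f q))"
    by (simp add: power2_eq_square sum_product algebra_simps sum.distrib)
  finally show ?thesis .
qed

lemma gram_sum_integrable:
  fixes f :: "'p \<Rightarrow> 'a \<Rightarrow> real" and a :: "'p \<Rightarrow> complex"
  assumes "\<And>p q. p \<in> P \<Longrightarrow> q \<in> P \<Longrightarrow> integrable M (\<lambda>t. f p t * f q t)"
  shows "integrable M (\<lambda>t. (cmod (\<Sum>p\<in>P. a p * complex_of_real (f p t)))\<^sup>2)"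
  unfolding cmod_sum_sq_expand
  by (intro Bochner_Integration.integrable_sum integrable_mult_right assms)

lemma gram_quadratic_form:
  fixes f :: "'p \<Rightarrow> 'a \<Rightarrow> real" and a :: "'p \<Rightarrow> complex"
  assumes int: "\<And>p q. p \<in> P \<Longrightarrow> q \<in> P \<Longrightarrow> integrable M (\<lambda>t. f p t * f q t)"
  shows "(\<Sum>p\<in>P. \<Sum>q\<in>P. a p * cnj (a q) * complex_of_real (LINT t|M. f p t * f q t))
       = complex_of_real (LINT t|M. (cmod (\<Sum>p\<in>P. a p * complex_of_real (f p t)))\<^sup>2)"
proof -
  define H where "H p q = (LINT t|M. f p t * f q t)" for p q
  have H_sym: "H p q = H q p" for p q
    unfolding H_def by (simp add: mult.commute)
  have integral: "(LINT t|M. (cmod (\<Sum>p\<in>P. a p * complex_of_real (f p t)))\<^sup>2)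
     = (\<Sum>p\<in>P. \<Sum>q\<in>P. (Re (a p) * Re (a q) + Im (a p) * Im (a q)) * H p q)"
    unfolding cmod_sum_sq_expand H_def
    by (simp add: Bochner_Integration.integral_sum int)
  txt \<open>The imaginary part vanishes because it is antisymmetric under swapping \<open>p\<close> and \<open>q\<close>.\<close>
  have imaginary: "(\<Sum>p\<in>P. \<Sum>q\<in>P. (Im (a p) * Re (a q) - Re (a p) * Im (a q)) * H p q) = 0"
  proof -
    have "(\<Sum>p\<in>P. \<Sum>q\<in>P. (Im (a p) * Re (a q) - Re (a p) * Im (a q)) * H p q)
       = (\<Sum>q\<in>P. \<Sum>p\<in>P. (Im (a p) * Re (a q) - Re (a p) * Im (a q)) * H p q)"
      by (rule sum.swap)
    also have "\<dots> = - (\<Sum>q\<in>P. \<Sum>p\<in>P. (Im (a q) * Re (a p) - Re (a q) * Im (a p)) * H q p)"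
      by (simp add: H_sym sum_negf[symmetric] algebra_simps)
    finally show ?thesis by simp
  qed
  show ?thesis
    unfolding integral H_def[symmetric]
    using imaginary by (simp add: complex_eq_iff algebra_simps)
qed

text \<open>Both components of \<open>S(t) = [s(t), s(t - \<tau>)]\<close> then live in
  \<open>[0, 3 T\<^sub>s)\<close>, i.e. on three consecutive symbol intervals.\<close>

locale waveform =
  fixes s :: "real \<Rightarrow> real" and Ts \<tau> :: real
  assumes Ts_pos: "0 < Ts" and tau_pos: "0 < \<tau>" and tau_less: "\<tau> < Ts"
    and s_measurable[measurable]: "s \<in> borel_measurable lborel"
    and s_support: "\<And>t. t \<notin> {0..2 * Ts} \<Longrightarrow> s t = 0"
    and s_square_integrable: "integrable lborel (\<lambda>t. (s t)\<^sup>2)"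
begin

lemma Scomp_support: "Scomp s \<tau> i t \<noteq> 0 \<Longrightarrow> 0 \<le> t \<and> t < 3 * Ts"
proof -
  assume "Scomp s \<tau> i t \<noteq> 0"
  then have "s t \<noteq> 0 \<or> s (t - \<tau>) \<noteq> 0"
    unfolding Scomp_def by (auto split: if_splits)
  then have "t \<in> {0..2 * Ts} \<or> t - \<tau> \<in> {0..2 * Ts}"
    using s_support by blast
  then show ?thesis using Ts_pos tau_pos tau_less by auto
qed

lemma Scomp_zero: "t < 0 \<or> 3 * Ts \<le> t \<Longrightarrow> Scomp s \<tau> i t = 0"
  using Scomp_support by force

lemma Scomp_measurable[measurable]: "(\<lambda>t. Scomp s \<tau> i (f t)) \<in> borel_measurable M"
  if [measurable]: "f \<in> borel_measurable M"
  unfolding Scomp_def by measurable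

text \<open>By \<open>|xy| \<le> x\<^sup>2 + y\<^sup>2\<close>, products of shifted components are integrable, so every
  entry of \<open>G(k)\<close> is a genuine integral.\<close>

lemma Scomp_product_integrable:
  "integrable lborel (\<lambda>t. Scomp s \<tau> i (t + a) * Scomp s \<tau> j (t + b))"
proof -
  have shift: "Scomp s \<tau> i (t + a) = s (t + (if i = 0 then a else a - \<tau>))" for i a t
    unfolding Scomp_def by (auto simp: algebra_simps)
  have sq: "integrable lborel (\<lambda>t. (s (t + c))\<^sup>2)" for c
    using integrable_shift_iff[of "\<lambda>t. (s t)\<^sup>2" c] s_square_integrable by simp
  have "integrable lborel (\<lambda>t. s (t + c) * s (t + d))" for c d
  proof (rule Bochner_Integration.integrable_bound[OF Bochner_Integration.integrable_add[OF sq sq]])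
    show "AE t in lborel. norm (s (t + c) * s (t + d)) \<le> norm ((s (t + c))\<^sup>2 + (s (t + d))\<^sup>2)"
    proof (intro AE_I2)
      fix t
      have "2 * \<bar>s (t + c)\<bar> * \<bar>s (t + d)\<bar> \<le> \<bar>s (t + c)\<bar>\<^sup>2 + \<bar>s (t + d)\<bar>\<^sup>2"
        by (rule sum_squares_bound)
      moreover have "\<bar>s (t + c) * s (t + d)\<bar> \<le> 2 * \<bar>s (t + c)\<bar> * \<bar>s (t + d)\<bar>"
        by (simp add: abs_mult)
      ultimately show "norm (s (t + c) * s (t + d)) \<le> norm ((s (t + c))\<^sup>2 + (s (t + d))\<^sup>2)"
        by simp
    qed
  qed measurable
  then show ?thesis unfolding shift .
qed

lemma integral_three_intervals:
  fixes g :: "real \<Rightarrow> real"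
  assumes g: "integrable lborel g" and g_zero: "\<And>u. u \<notin> {0..<3 * Ts} \<Longrightarrow> g u = 0"
  shows "(LINT u|lborel. g u) = (\<Sum>k<3. LINT t:{0..<Ts}|lborel. g (t + real k * Ts))"
proof -
  define I where "I k = {real k * Ts..<real (Suc k) * Ts}" for k
  have partition: "g u = (\<Sum>k<3. indicator (I k) u * g u)" for u
  proof (cases "u \<in> {0..<3 * Ts}")
    case True
    have "(\<Sum>k<3. indicator (I k) u * g u)
        = (indicator (I 0) u + indicator (I 1) u + indicator (I 2) u) * g u"
      by (simp add: numeral_3_eq_3 numeral_2_eq_2 algebra_simps)
    moreover have "indicator (I 0) u + indicator (I 1) u + indicator (I 2) u = (1::real)"
      using True by (cases "u < Ts"; cases "u < 2 * Ts") (auto simp: I_def indicator_def)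
    ultimately show ?thesis by simp
  qed (use g_zero in simp)
  have piece: "(LINT u|lborel. indicator (I k) u * g u) = (LINT t:{0..<Ts}|lborel. g (t + real k * Ts))" for k
  proof -
    have "(LINT u|lborel. indicator (I k) u * g u)
        = (LINT t|lborel. indicator (I k) (t + real k * Ts) * g (t + real k * Ts))"
      by (rule integral_shift[symmetric])
    also have "\<dots> = (LINT t:{0..<Ts}|lborel. g (t + real k * Ts))"
      unfolding set_lebesgue_integral_def
      by (intro Bochner_Integration.integral_cong refl) (auto simp: I_def indicator_def algebra_simps)
    finally show ?thesis .
  qed
  have "(LINT u|lborel. g u) = (LINT u|lborel. (\<Sum>k<3. indicator (I k) u * g u))"
    by (subst partition) simp
  also have "\<dots> = (\<Sum>k<3. LINT u|lborel. indicator (I k) u * g u)"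
    using integrable_mult_indicator[of "I k" lborel g for k] g
    by (intro Bochner_Integration.integral_sum) (simp add: I_def)
  finally show ?thesis by (simp only: piece)
qed

definition block_gram :: "nat \<Rightarrow> nat \<Rightarrow> real \<Rightarrow> real \<Rightarrow> real" where
  "block_gram i j a b = (LINT t:{0..<Ts}|lborel. Scomp s \<tau> i (t + a * Ts) * Scomp s \<tau> j (t + b * Ts))"

lemma block_gram_sym: "block_gram i j a b = block_gram j i b a"
  unfolding block_gram_def by (simp add: mult.commute)

lemma block_gram_zero:
  assumes "b \<le> -1 \<or> 3 \<le> b"
  shows "block_gram i j a b = 0"
proof -
  have "Scomp s \<tau> j (t + b * Ts) = 0" if "t \<in> {0..<Ts}" for t
  proof (rule Scomp_zero)
    have "b * Ts \<le> -1 * Ts \<or> 3 * Ts \<le> b * Ts"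
      using assms Ts_pos mult_right_mono[of b "-1" Ts] mult_right_mono[of 3 b Ts] by auto
    with that show "t + b * Ts < 0 \<or> 3 * Ts \<le> t + b * Ts" by (simp only: atLeastLessThan_iff) arith
  qed
  then show ?thesis
    unfolding block_gram_def set_lebesgue_integral_def
    by (intro integral_eq_zero_AE AE_I2) (simp add: indicator_def)
qed

text \<open>Since both components live on three symbol intervals, \<open>G(m)\<close> is a sum of three
  block coefficients and vanishes for \<open>|m| \<ge> 3\<close>.\<close>

lemma Gmat_blocks: "Gmat s Ts \<tau> m i j = (\<Sum>k<3. block_gram i j (real k) (real k - of_int m))"
proof -
  have "Gmat s Ts \<tau> m i j = (\<Sum>k<3. LINT t:{0..<Ts}|lborel.
      Scomp s \<tau> i (t + real k * Ts) * Scomp s \<tau> j (t + real k * Ts - of_int m * Ts))"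
    unfolding Gmat_def
  proof (rule integral_three_intervals)
    show "integrable lborel (\<lambda>u. Scomp s \<tau> i u * Scomp s \<tau> j (u - real_of_int m * Ts))"
      using Scomp_product_integrable[of i 0 j "- of_int m * Ts"] by simp
  qed (use Scomp_zero in auto)
  then show ?thesis
    unfolding block_gram_def by (simp add: algebra_simps)
qed

lemma Gmat_vanishes: "3 \<le> \<bar>m\<bar> \<Longrightarrow> Gmat s Ts \<tau> m i j = 0"
  unfolding Gmat_blocks by (intro sum.neutral ballI block_gram_zero) auto

lemma Tmat_trig_poly: "Tmat s Ts \<tau> \<omega> i j =
   (\<Sum>k<3. \<Sum>l<3. complex_of_real (block_gram i j (real k) (real l)) * cis ((real l - real k) * \<omega>))"
proof -
  have "Tmat s Ts \<tau> \<omega> i j =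
      (\<Sum>\<^sub>\<infinity>m\<in>{-2..2}. complex_of_real (Gmat s Ts \<tau> m i j) * cis (- (real_of_int m * \<omega>)))"
    unfolding Tmat_def by (rule infsum_cong_neutral) (auto intro: Gmat_vanishes)
  also have "{-2..2::int} = {-2, -1, 0, 1, 2}" by auto
  finally show ?thesis
    by (simp add: Gmat_blocks numeral_3_eq_3 block_gram_zero algebra_simps)
qed

lemma Tmat_hermitian: "cnj (Tmat s Ts \<tau> \<omega> i j) = Tmat s Ts \<tau> \<omega> j i"
proof -
  have "cnj (Tmat s Ts \<tau> \<omega> i j) =
      (\<Sum>k<3. \<Sum>l<3. complex_of_real (block_gram i j (real k) (real l)) * cis ((real k - real l) * \<omega>))"
    unfolding Tmat_trig_poly cnj_sum by (simp add: cis_cnj algebra_simps)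
  also have "\<dots> = (\<Sum>l<3. \<Sum>k<3. complex_of_real (block_gram i j (real k) (real l)) * cis ((real k - real l) * \<omega>))"
    by (rule sum.swap)
  also have "\<dots> = Tmat s Ts \<tau> \<omega> j i"
    unfolding Tmat_trig_poly by (simp add: block_gram_sym)
  finally show ?thesis .
qed

lemma Tmat_diag_real: "Im (Tmat s Ts \<tau> \<omega> i i) = 0"
  using Tmat_hermitian[of \<omega> i i] by (metis Reals_cnj_iff complex_is_Real_iff)

lemma Tmat_continuous: "continuous_on A (\<lambda>\<omega>. Tmat s Ts \<tau> \<omega> i j)"
  unfolding Tmat_trig_poly by (intro continuous_intros)

definition windowed :: "nat \<times> nat \<Rightarrow> real \<Rightarrow> real" where
  "windowed p t = indicator {0..<Ts} t * Scomp s \<tau> (fst p) (t + real (snd p) * Ts)"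

lemma windowed_product:
  "windowed p t * windowed q t = indicator {0..<Ts} t *
     (Scomp s \<tau> (fst p) (t + real (snd p) * Ts) * Scomp s \<tau> (fst q) (t + real (snd q) * Ts))"
  unfolding windowed_def by (simp add: indicator_def)

lemma windowed_product_integrable: "integrable lborel (\<lambda>t. windowed p t * windowed q t)"
  unfolding windowed_product
  using integrable_mult_indicator[of "{0..<Ts}" lborel, OF _ Scomp_product_integrable] by simp

lemma block_gram_windowed:
  "block_gram i j (real k) (real l) = (LINT t|lborel. windowed (i, k) t * windowed (j, l) t)"
  unfolding windowed_product block_gram_def set_lebesgue_integral_def by simp

definition energy :: "(nat \<Rightarrow> complex) \<Rightarrow> real \<Rightarrow> real \<Rightarrow> real" where
  "energy c \<omega> t = indicator {0..<Ts} t *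
     (cmod (c 0 * Fw s Ts 2 0 t (-\<omega>) + c 1 * Fw s Ts 2 \<tau> t (-\<omega>)))\<^sup>2"

lemma energy_nonneg: "0 \<le> energy c \<omega> t"
  unfolding energy_def by simp

lemma energy_integral_nonneg: "0 \<le> (LINT t|lborel. energy c \<omega> t)"
  by (intro integral_nonneg_AE AE_I2 energy_nonneg)

lemma windowed_combination:
  "(\<Sum>p\<in>{..<2}\<times>{..<3}. (c (fst p) * cis (- (real (snd p) * \<omega>))) * complex_of_real (windowed p t))
   = complex_of_real (indicator {0..<Ts} t) * (c 0 * Fw s Ts 2 0 t (-\<omega>) + c 1 * Fw s Ts 2 \<tau> t (-\<omega>))"
  unfolding windowed_def Fw_def Scomp_def
  by (simp add: numeral_3_eq_3 numeral_2_eq_2 lessThan_Suc atLeast0_atMost_Suc algebra_simps)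

lemma energy_eq: "energy c \<omega> t =
   (cmod (\<Sum>p\<in>{..<2}\<times>{..<3}. (c (fst p) * cis (- (real (snd p) * \<omega>))) * complex_of_real (windowed p t)))\<^sup>2"
  unfolding windowed_combination energy_def
  by (simp add: norm_mult power_mult_distrib indicator_def)

lemma energy_integrable: "integrable lborel (energy c \<omega>)"
  unfolding energy_eq[abs_def]
  by (rule gram_sum_integrable) (rule windowed_product_integrable)

lemma Tmat_quadratic_form:
  "c 0 * cnj (c 0) * Tmat s Ts \<tau> \<omega> 0 0 + c 0 * cnj (c 1) * Tmat s Ts \<tau> \<omega> 0 1
   + c 1 * cnj (c 0) * Tmat s Ts \<tau> \<omega> 1 0 + c 1 * cnj (c 1) * Tmat s Ts \<tau> \<omega> 1 1
   = complex_of_real (LINT t|lborel. energy c \<omega> t)"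
proof -
  define a where "a p = c (fst p) * cis (- (real (snd p) * \<omega>))" for p
  define P where "P = {..<2::nat} \<times> {..<3::nat}"
  have sum_cartesian: "(\<Sum>q\<in>A \<times> B. h q) = (\<Sum>x\<in>A. \<Sum>y\<in>B. h (x, y))"
    for A :: "nat set" and B :: "nat set" and h :: "nat \<times> nat \<Rightarrow> complex"
    by (simp add: sum.cartesian_product)
  have factor: "c i * cnj (c j) * (complex_of_real h * cis ((real l - real k) * \<omega>))
      = a (i, k) * cnj (a (j, l)) * complex_of_real h" for i j k l h
  proof -
    have "cis ((real l - real k) * \<omega>) = cis (- (real k * \<omega>)) * cis (real l * \<omega>)"
      by (simp add: cis_mult algebra_simps)
    then show ?thesis unfolding a_def by (simp add: cis_cnj algebra_simps)
  qed
  have "(\<Sum>i<2. \<Sum>j<2. c i * cnj (c j) * Tmat s Ts \<tau> \<omega> i j)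
     = (\<Sum>i<2. \<Sum>j<2. \<Sum>k<3. \<Sum>l<3. a (i, k) * cnj (a (j, l)) * block_gram i j (real k) (real l))"
    unfolding Tmat_trig_poly by (simp add: sum_distrib_left factor)
  also have "\<dots> = (\<Sum>i<2. \<Sum>k<3. \<Sum>j<2. \<Sum>l<3. a (i, k) * cnj (a (j, l)) * block_gram i j (real k) (real l))"
    by (rule sum.cong[OF refl], rule sum.swap)
  also have "\<dots> = (\<Sum>p\<in>P. \<Sum>q\<in>P. a p * cnj (a q) * complex_of_real (LINT t|lborel. windowed p t * windowed q t))"
    unfolding P_def block_gram_windowed sum_cartesian ..
  also have "\<dots> = complex_of_real (LINT t|lborel. energy c \<omega> t)"
    unfolding energy_eq a_def P_def by (rule gram_quadratic_form) (rule windowed_product_integrable)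
  finally show ?thesis
    by (simp add: numeral_2_eq_2 lessThan_Suc add_ac)
qed

end

locale admissible_waveform = waveform +
  assumes lin_indep: "lin_indep_cond s Ts \<tau> 2"
    and unit_energy: "(LINT t|lborel. (s t)\<^sup>2) = 1"
begin

text \<open>Unit energy, split over the three symbol intervals.\<close>

lemma block_gram_diagonal: "block_gram 0 0 0 0 + block_gram 0 0 1 1 + block_gram 0 0 2 2 = 1"
proof -
  have "(LINT t|lborel. (s t)\<^sup>2) = (\<Sum>k<3. LINT t:{0..<Ts}|lborel. (s (t + real k * Ts))\<^sup>2)"
  proof (rule integral_three_intervals[OF s_square_integrable])
    fix u assume "u \<notin> {0..<3 * Ts}"
    then have "u \<notin> {0..2 * Ts}" using Ts_pos by auto
    then show "(s u)\<^sup>2 = 0" using s_support by simp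
  qed
  then show ?thesis
    unfolding unit_energy block_gram_def Scomp_def
    by (simp add: numeral_3_eq_3 numeral_2_eq_2 power2_eq_square)
qed

text \<open>\<open>s(t)\<close> and \<open>s(t + 2 T\<^sub>s)\<close> overlap only at the single point \<open>t = 0\<close>.\<close>

lemma block_gram_far: "block_gram 0 0 0 2 = 0"
proof -
  have "AE t in lborel. indicator {0..<Ts} t * (Scomp s \<tau> 0 (t + 0 * Ts) * Scomp s \<tau> 0 (t + 2 * Ts)) = (0::real)"
    using AE_lborel_singleton[of 0]
  proof eventually_elim
    case (elim t)
    show ?case
    proof (cases "t \<in> {0..<Ts}")
      case True
      then have "s (t + 2 * Ts) = 0" using elim s_support[of "t + 2 * Ts"] by auto
      then show ?thesis by (simp add: Scomp_def)
    qed simp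
  qed
  then show ?thesis
    unfolding block_gram_def set_lebesgue_integral_def real_scaleR_def
    by (rule integral_eq_zero_AE)
qed

definition beta :: real where
  "beta = block_gram 0 0 0 1 + block_gram 0 0 1 0 + block_gram 0 0 1 2 + block_gram 0 0 2 1"

definition T11 :: "real \<Rightarrow> real" where
  "T11 \<omega> = Re (Tmat s Ts \<tau> \<omega> 0 0)"

lemma T11_cos: "T11 \<omega> = 1 + beta * cos \<omega>"
  unfolding T11_def Tmat_trig_poly beta_def
  using block_gram_diagonal block_gram_far block_gram_sym[of 0 0 0 2]
  by (simp add: numeral_3_eq_3 numeral_2_eq_2 lessThan_Suc algebra_simps)

lemma energy_integral_pos:
  assumes \<omega>: "\<omega> \<in> {-pi..pi}" and c: "c 0 \<noteq> 0 \<or> c 1 \<noteq> 0"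
  shows "0 < (LINT t|lborel. energy c \<omega> t)"
proof (rule ccontr)
  assume "\<not> 0 < (LINT t|lborel. energy c \<omega> t)"
  then have "(LINT t|lborel. energy c \<omega> t) = 0"
    using energy_integral_nonneg[of c \<omega>] by linarith
  then have "AE t in lborel. energy c \<omega> t = 0"
    using integral_nonneg_eq_0_iff_AE[OF energy_integrable] energy_nonneg by simp
  then have "AE t in lborel. t \<in> {0..Ts} \<longrightarrow> c 0 * Fw s Ts 2 0 t (-\<omega>) + c 1 * Fw s Ts 2 \<tau> t (-\<omega>) = 0"
    using AE_lborel_singleton[of Ts]
    by eventually_elim (auto simp: energy_def indicator_def)
  moreover have "- \<omega> \<in> {-pi..pi}" using \<omega> by auto
  ultimately show False using lin_indep c unfolding lin_indep_cond_def by blast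
qed

lemma T11_pos: "\<omega> \<in> {-pi..pi} \<Longrightarrow> 0 < T11 \<omega>"
  using Tmat_quadratic_form[of "\<lambda>i. if i = 0 then 1 else 0" \<omega>]
    energy_integral_pos[of \<omega> "\<lambda>i. if i = 0 then 1 else 0"]
  unfolding T11_def by simp

lemma beta_bound: "\<bar>beta\<bar> < 1"
  using T11_pos[of 0] T11_pos[of pi] T11_cos[of 0] T11_cos[of pi] by auto

definition T11_min :: real where
  "T11_min = 1 - \<bar>beta\<bar>"

lemma T11_min_pos: "0 < T11_min"
  using beta_bound by (simp add: T11_min_def)

lemma T11_min_le_1: "T11_min \<le> 1"
  unfolding T11_min_def by simp

lemma T11_bounds: "T11_min \<le> T11 \<omega>" "T11 \<omega> \<le> 2"
proof -
  have "\<bar>beta * cos \<omega>\<bar> \<le> \<bar>beta\<bar>"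
    by (simp add: abs_mult mult_left_le)
  then show "T11_min \<le> T11 \<omega>" "T11 \<omega> \<le> 2"
    unfolding T11_cos T11_min_def using beta_bound by auto
qed

definition detR :: "real \<Rightarrow> real" where
  "detR \<omega> = Re (detT s Ts \<tau> \<omega>)"

text \<open>\<open>det T~ \<ge> 0\<close>: evaluate the (semidefinite) quadratic form at \<open>c = (-b*, a)\<close>, where
  \<open>a = T~\<^sub>1\<^sub>1\<close> and \<open>b = T~\<^sub>1\<^sub>2\<close>, which gives \<open>a det T~\<close>.\<close>

lemma detR_nonneg: "0 \<le> detR \<omega>"
proof -
  define a where "a = T11 \<omega>"
  define d where "d = Re (Tmat s Ts \<tau> \<omega> 1 1)"
  define b where "b = Tmat s Ts \<tau> \<omega> 0 1"
  have T00: "Tmat s Ts \<tau> \<omega> 0 0 = complex_of_real a"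
    using Tmat_diag_real[of \<omega> 0] unfolding a_def T11_def by (simp add: complex_eq_iff)
  have T11: "Tmat s Ts \<tau> \<omega> 1 1 = complex_of_real d"
    using Tmat_diag_real[of \<omega> 1] unfolding d_def by (simp add: complex_eq_iff)
  have T10: "Tmat s Ts \<tau> \<omega> 1 0 = cnj b"
    using Tmat_hermitian[of \<omega> 0 1] unfolding b_def by simp
  have a_pos: "0 < a"
    using T11_bounds(1)[of \<omega>] T11_min_pos unfolding a_def by linarith
  define c :: "nat \<Rightarrow> complex" where "c i = (if i = 0 then - cnj b else complex_of_real a)" for i
  have "complex_of_real (a * (a * d - (cmod b)\<^sup>2)) = complex_of_real (LINT t|lborel. energy c \<omega> t)"
    unfolding Tmat_quadratic_form[of c \<omega>, symmetric] c_def T00 T11 T10 b_def[symmetric]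
    by (simp add: complex_eq_iff cmod_power2[unfolded power2_eq_square] algebra_simps power2_eq_square)
  then have "0 \<le> a * (a * d - (cmod b)\<^sup>2)"
    unfolding of_real_eq_iff using energy_integral_nonneg by simp
  moreover have "detR \<omega> = a * d - (cmod b)\<^sup>2"
    unfolding detR_def detT_def T00 T11 T10 b_def[symmetric]
    by (simp add: cmod_power2[unfolded power2_eq_square] power2_eq_square)
  ultimately show ?thesis
    using a_pos by (simp add: zero_le_mult_iff)
qed

lemma T11_continuous: "continuous_on A T11"
  unfolding T11_def by (intro continuous_intros Tmat_continuous)

lemma detR_continuous: "continuous_on A detR"
  unfolding detR_def detT_def by (intro continuous_intros Tmat_continuous)

end

lemma mean_over_period_bounds:
  fixes g :: "real \<Rightarrow> real"
  assumes g: "continuous_on {-pi..pi} g"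
  shows "(\<And>x. x \<in> {-pi..pi} \<Longrightarrow> g x \<le> u) \<Longrightarrow> 1 / (2 * pi) * (\<integral>x\<in>{-pi..pi}. g x \<partial>lborel) \<le> u"
    and "(\<And>x. x \<in> {-pi..pi} \<Longrightarrow> l \<le> g x) \<Longrightarrow> l \<le> 1 / (2 * pi) * (\<integral>x\<in>{-pi..pi}. g x \<partial>lborel)"
proof -
  have integrable: "set_integrable lborel {-pi..pi} h" if "continuous_on {-pi..pi} h" for h :: "real \<Rightarrow> real"
    unfolding set_integrable_def using borel_integrable_compact[OF compact_Icc that] .
  have const: "(\<integral>x\<in>{-pi..pi}. c \<partial>lborel) = 2 * pi * c" for c :: real
    by (subst set_integral_const) (auto simp: measure_def)
  note mono = set_integral_mono[OF integrable integrable, OF continuous_on_const g]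
    set_integral_mono[OF integrable integrable, OF g continuous_on_const]
  show "1 / (2 * pi) * (\<integral>x\<in>{-pi..pi}. g x \<partial>lborel) \<le> u" if "\<And>x. x \<in> {-pi..pi} \<Longrightarrow> g x \<le> u"
    using mono(2)[of u] that unfolding const by (simp add: field_simps)
  show "l \<le> 1 / (2 * pi) * (\<integral>x\<in>{-pi..pi}. g x \<partial>lborel)" if "\<And>x. x \<in> {-pi..pi} \<Longrightarrow> l \<le> g x"
    using mono(1)[of l] that unfolding const by (simp add: field_simps)
qed

context admissible_waveform
begin

text \<open>The MAC integrand dominates \<open>1 + \<rho> x\<^sub>1 T~\<^sub>m\<^sub>i\<^sub>n\<close>, since \<open>T~\<^sub>1\<^sub>1 \<ge> T~\<^sub>m\<^sub>i\<^sub>n > 0\<close> and \<open>det T~ \<ge> 0\<close>.\<close>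

lemma MAC_integrand_lower:
  assumes "0 \<le> \<rho>" "0 \<le> x1" "0 \<le> x2"
  shows "1 + \<rho> * x1 * T11_min \<le> 1 + \<rho> * (x1 + x2) * T11 \<omega> + \<rho>\<^sup>2 * x1 * x2 * detR \<omega>"
proof -
  have "\<rho> * x1 * T11_min \<le> \<rho> * x1 * T11 \<omega>"
    using T11_bounds(1)[of \<omega>] assms by (intro mult_left_mono) auto
  moreover have "0 \<le> \<rho> * x2 * T11 \<omega>"
    using assms T11_bounds(1)[of \<omega>] T11_min_pos by simp
  moreover have "0 \<le> \<rho>\<^sup>2 * x1 * x2 * detR \<omega>"
    using assms detR_nonneg[of \<omega>] by simp
  ultimately show ?thesis by (simp add: algebra_simps)
qed

lemma MAC_integrand_pos:
  "0 \<le> \<rho> \<Longrightarrow> 0 \<le> x1 \<Longrightarrow> 0 \<le> x2 \<Longrightarrow> 0 < 1 + \<rho> * (x1 + x2) * T11 \<omega> + \<rho>\<^sup>2 * x1 * x2 * detR \<omega>"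
  using MAC_integrand_lower[of \<rho> x1 x2 \<omega>] T11_min_pos
  by (smt (verit) mult_nonneg_nonneg)

lemma I_ESD_bounds:
  assumes \<rho>: "0 \<le> \<rho>"
  shows "log 2 (1 + \<rho> * (cmod a)\<^sup>2 * T11_min) \<le> I_ESD s Ts \<tau> \<rho> a"
    and "I_ESD s Ts \<tau> \<rho> a \<le> log 2 (1 + \<rho> * (cmod a)\<^sup>2 * 2)"
proof -
  have pos: "0 < 1 + \<rho> * (cmod a)\<^sup>2 * T11 \<omega>" for \<omega>
    using MAC_integrand_pos[OF \<rho>, of "(cmod a)\<^sup>2" 0 \<omega>] by simp
  have cont: "continuous_on {-pi..pi} (\<lambda>\<omega>. log 2 (1 + \<rho> * (cmod a)\<^sup>2 * T11 \<omega>))"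
    using pos by (intro continuous_intros T11_continuous) (auto simp: less_imp_neq[symmetric])
  have pos_min: "0 < 1 + \<rho> * (cmod a)\<^sup>2 * T11_min"
    using T11_min_pos \<rho> by (simp add: add_pos_nonneg)
  have "\<rho> * (cmod a)\<^sup>2 * T11_min \<le> \<rho> * (cmod a)\<^sup>2 * T11 \<omega>"
    and "\<rho> * (cmod a)\<^sup>2 * T11 \<omega> \<le> \<rho> * (cmod a)\<^sup>2 * 2" for \<omega>
    using T11_bounds[of \<omega>] \<rho> by (auto intro: mult_left_mono)
  then have "log 2 (1 + \<rho> * (cmod a)\<^sup>2 * T11_min) \<le> log 2 (1 + \<rho> * (cmod a)\<^sup>2 * T11 \<omega>)"
    and "log 2 (1 + \<rho> * (cmod a)\<^sup>2 * T11 \<omega>) \<le> log 2 (1 + \<rho> * (cmod a)\<^sup>2 * 2)" for \<omega>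
    using pos[of \<omega>] pos_min \<rho> by (simp_all add: add_pos_nonneg)
  then show "log 2 (1 + \<rho> * (cmod a)\<^sup>2 * T11_min) \<le> I_ESD s Ts \<tau> \<rho> a"
    and "I_ESD s Ts \<tau> \<rho> a \<le> log 2 (1 + \<rho> * (cmod a)\<^sup>2 * 2)"
    unfolding I_ESD_def T11_def[symmetric]
    by (intro mean_over_period_bounds[OF cont]; simp)+
qed

lemma I_EMacA_lower:
  assumes \<rho>: "0 \<le> \<rho>"
  shows "log 2 (1 + \<rho> * (cmod a1)\<^sup>2 * T11_min) \<le> I_EMacA s Ts \<tau> \<rho> a1 a2"
proof -
  have cont: "continuous_on {-pi..pi} (\<lambda>\<omega>. log 2 (1 + \<rho> * ((cmod a1)\<^sup>2 + (cmod a2)\<^sup>2) * T11 \<omega>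
      + \<rho>\<^sup>2 * (cmod a1)\<^sup>2 * (cmod a2)\<^sup>2 * detR \<omega>))"
    using MAC_integrand_pos[OF \<rho>]
    by (intro continuous_intros T11_continuous detR_continuous) (auto simp: less_imp_neq[symmetric])
  have "0 < 1 + \<rho> * (cmod a1)\<^sup>2 * T11_min"
    using MAC_integrand_pos[OF \<rho>, of "(cmod a1)\<^sup>2" 0 0] T11_min_pos \<rho> by (simp add: add_pos_nonneg)
  then have "log 2 (1 + \<rho> * (cmod a1)\<^sup>2 * T11_min) \<le> log 2 (1 + \<rho> * ((cmod a1)\<^sup>2 + (cmod a2)\<^sup>2) * T11 \<omega>
      + \<rho>\<^sup>2 * (cmod a1)\<^sup>2 * (cmod a2)\<^sup>2 * detR \<omega>)" for \<omega>
    using MAC_integrand_lower[OF \<rho>, of "(cmod a1)\<^sup>2" "(cmod a2)\<^sup>2" \<omega>] by simp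
  then show ?thesis
    unfolding I_EMacA_def T11_def[symmetric] detR_def[symmetric]
    by (intro mean_over_period_bounds(2)[OF cont])
qed

lemma I_EMacA_sym: "I_EMacA s Ts \<tau> \<rho> a1 a2 = I_EMacA s Ts \<tau> \<rho> a2 a1"
  unfolding I_EMacA_def by (simp add: algebra_simps)

lemma I_ESD_nonneg: "0 \<le> \<rho> \<Longrightarrow> 0 \<le> I_ESD s Ts \<tau> \<rho> a"
  using I_ESD_bounds(1)[of \<rho> a] T11_min_pos by (smt (verit) mult_nonneg_nonneg zero_le_power2 zero_le_log_cancel_iff)

lemma I_EMacA_nonneg: "0 \<le> \<rho> \<Longrightarrow> 0 \<le> I_EMacA s Ts \<tau> \<rho> a1 a2"
  using I_EMacA_lower[of \<rho> a1 a2] T11_min_pos by (smt (verit) mult_nonneg_nonneg zero_le_power2 zero_le_log_cancel_iff)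

lemma T11_measurable[measurable]: "(\<lambda>\<omega>. Re (Tmat s Ts \<tau> \<omega> 0 0)) \<in> borel_measurable borel"
  using borel_measurable_continuous_onI[OF T11_continuous] unfolding T11_def .

lemma detR_measurable[measurable]: "(\<lambda>\<omega>. Re (detT s Ts \<tau> \<omega>)) \<in> borel_measurable borel"
  using borel_measurable_continuous_onI[OF detR_continuous] unfolding detR_def .

lemma I_ESD_measurable[measurable]: "(\<lambda>g. I_ESD s Ts \<tau> \<rho> (f g)) \<in> borel_measurable M"
  if [measurable]: "f \<in> borel_measurable M"
  unfolding I_ESD_def set_lebesgue_integral_def by measurable

lemma I_EMacA_measurable[measurable]: "(\<lambda>g. I_EMacA s Ts \<tau> \<rho> (f g) (h g)) \<in> borel_measurable M"
  if [measurable]: "f \<in> borel_measurable M" "h \<in> borel_measurable M"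
  unfolding I_EMacA_def set_lebesgue_integral_def by measurable

end

lemma sets_cgauss[simp, measurable_cong]: "sets (cgauss v) = sets borel"
  unfolding cgauss_def by simp

lemma space_cgauss[simp]: "space (cgauss v) = UNIV"
  unfolding cgauss_def by simp

lemma emeasure_cgauss: "A \<in> sets borel \<Longrightarrow>
  emeasure (cgauss v) A = (\<integral>\<^sup>+ z. ennreal (exp (- (cmod z)\<^sup>2 / v) / (pi * v)) * indicator A z \<partial>lborel)"
  unfolding cgauss_def by (subst emeasure_density) auto

lemma emeasure_lborel_ball_complex:
  "0 \<le> r \<Longrightarrow> emeasure lborel (ball (0::complex) r) = ennreal (pi * r\<^sup>2)"
proof -
  have "Gamma (2::real) = 1" using Gamma_fact[of 1] by simp
  then show "0 \<le> r \<Longrightarrow> emeasure lborel (ball (0::complex) r) = ennreal (pi * r\<^sup>2)"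
    by (simp add: emeasure_ball unit_ball_vol_def)
qed

text \<open>The density is at most \<open>1/(\<pi> v)\<close> everywhere and at least \<open>e\<^sup>-\<^sup>1/(\<pi> v)\<close> on the
  ball of radius \<open>\<surd>v\<close>, which gives \<open>e\<^sup>-\<^sup>1 r\<^sup>2/v \<le> P(|\<alpha>| < r) \<le> r\<^sup>2/v\<close>.\<close>

lemma cgauss_ball_upper:
  assumes v: "0 < v" and r: "0 \<le> r"
  shows "emeasure (cgauss v) (ball 0 r) \<le> ennreal (r\<^sup>2 / v)"
proof -
  have "emeasure (cgauss v) (ball 0 r)
      \<le> (\<integral>\<^sup>+ z. ennreal (1 / (pi * v)) * indicator (ball (0::complex) r) z \<partial>lborel)"
    unfolding emeasure_cgauss[OF borel_open[OF open_ball]]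
    using v by (intro nn_integral_mono mult_right_mono ennreal_leI divide_right_mono) auto
  also have "\<dots> = ennreal (1 / (pi * v)) * ennreal (pi * r\<^sup>2)"
    by (subst nn_integral_cmult_indicator) (auto simp: emeasure_lborel_ball_complex[OF r])
  also have "\<dots> = ennreal (r\<^sup>2 / v)"
    using v by (subst ennreal_mult[symmetric]) (auto simp: field_simps)
  finally show ?thesis .
qed

lemma cgauss_ball_lower:
  assumes v: "0 < v" and r: "0 \<le> r" "r\<^sup>2 \<le> v"
  shows "ennreal (exp (-1) * r\<^sup>2 / v) \<le> emeasure (cgauss v) (ball 0 r)"
proof -
  have density: "exp (-1) / (pi * v) \<le> exp (- (cmod z)\<^sup>2 / v) / (pi * v)" if "z \<in> ball 0 r" for z
  proof -
    have "(cmod z)\<^sup>2 \<le> r\<^sup>2" using that by (simp add: power_mono)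
    then have "(cmod z)\<^sup>2 \<le> v" using r by linarith
    then have "(cmod z)\<^sup>2 / v \<le> 1" using v by simp
    then show ?thesis using v by (intro divide_right_mono) auto
  qed
  have "ennreal (exp (-1) * r\<^sup>2 / v) = ennreal (exp (-1) / (pi * v)) * ennreal (pi * r\<^sup>2)"
    using v by (subst ennreal_mult[symmetric]) (auto simp: field_simps)
  also have "\<dots> = (\<integral>\<^sup>+ z. ennreal (exp (-1) / (pi * v)) * indicator (ball (0::complex) r) z \<partial>lborel)"
    by (subst nn_integral_cmult_indicator) (auto simp: emeasure_lborel_ball_complex[OF r(1)])
  also have "\<dots> \<le> emeasure (cgauss v) (ball 0 r)"
    unfolding emeasure_cgauss[OF borel_open[OF open_ball]]
    using density by (intro nn_integral_mono) (auto simp: indicator_def ennreal_leI)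
  finally show ?thesis .
qed

text \<open>Finiteness of the Gaussian measure: cover the plane by the balls of radius \<open>n + 1\<close>,
  on the \<open>n\<close>-th of which the density is at most \<open>exp(-n\<^sup>2/v)/(\<pi> v)\<close>.\<close>

lemma gauss_shell_summable:
  assumes "0 < v"
  shows "summable (\<lambda>n::nat. (real n + 1)\<^sup>2 * exp (- (real n)\<^sup>2 / v))"
proof (rule summable_comparison_test_bigo)
  show "summable (\<lambda>n::nat. norm (inverse (real n ^ 2)))"
    using inverse_power_summable[of 2] by simp
  show "(\<lambda>n::nat. (real n + 1)\<^sup>2 * exp (- (real n)\<^sup>2 / v)) \<in> O(\<lambda>n. inverse (real n ^ 2))"
    using assms by real_asymp
qed

lemma gauss_density_cover:
  assumes v: "0 < v"
  shows "ennreal (exp (- (cmod z)\<^sup>2 / v) / (pi * v))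
    \<le> (\<Sum>n. ennreal (exp (- (real n)\<^sup>2 / v) / (pi * v)) * indicator (ball 0 (real n + 1)) z)"
    (is "_ \<le> (\<Sum>n. ?c n)")
proof -
  define n where "n = nat \<lfloor>cmod z\<rfloor>"
  have "real n = of_int \<lfloor>cmod z\<rfloor>" unfolding n_def by simp
  then have n: "real n \<le> cmod z" "cmod z < real n + 1" by linarith+
  then have "exp (- (cmod z)\<^sup>2 / v) / (pi * v) \<le> exp (- (real n)\<^sup>2 / v) / (pi * v)"
    using v by (intro divide_right_mono) (auto intro: power_mono divide_right_mono)
  then have "ennreal (exp (- (cmod z)\<^sup>2 / v) / (pi * v)) \<le> ?c n"
    using n by (simp add: ennreal_leI)
  also have "\<dots> \<le> (\<Sum>n. ?c n)"
    using ennreal_suminf_lessD[of ?c _ n] by (meson linorder_not_le order_less_irrefl)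
  finally show ?thesis .
qed

lemma cgauss_finite:
  assumes v: "0 < v"
  shows "emeasure (cgauss v) UNIV < \<infinity>"
proof -
  define c where "c n = ennreal (exp (- (real n)\<^sup>2 / v) / (pi * v))" for n :: nat
  have ball_integral: "(\<integral>\<^sup>+ z. c n * indicator (ball (0::complex) (real n + 1)) z \<partial>lborel)
      = ennreal ((real n + 1)\<^sup>2 * exp (- (real n)\<^sup>2 / v) / v)" for n
  proof -
    have "(\<integral>\<^sup>+ z. c n * indicator (ball (0::complex) (real n + 1)) z \<partial>lborel) = c n * ennreal (pi * (real n + 1)\<^sup>2)"
      by (subst nn_integral_cmult_indicator) (auto simp: emeasure_lborel_ball_complex)
    also have "\<dots> = ennreal ((real n + 1)\<^sup>2 * exp (- (real n)\<^sup>2 / v) / v)"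
      unfolding c_def using v by (subst ennreal_mult[symmetric]) (auto simp: field_simps)
    finally show ?thesis .
  qed
  have "emeasure (cgauss v) UNIV = (\<integral>\<^sup>+ z. ennreal (exp (- (cmod z)\<^sup>2 / v) / (pi * v)) \<partial>lborel)"
    using emeasure_cgauss[of UNIV v] by simp
  also have "\<dots> \<le> (\<integral>\<^sup>+ z. (\<Sum>n. c n * indicator (ball (0::complex) (real n + 1)) z) \<partial>lborel)"
    unfolding c_def by (rule nn_integral_mono) (rule gauss_density_cover[OF v])
  also have "\<dots> = (\<Sum>n. ennreal ((real n + 1)\<^sup>2 * exp (- (real n)\<^sup>2 / v) / v))"
  proof (subst nn_integral_suminf)
    show "(\<lambda>z. c n * indicator (ball (0::complex) (real n + 1)) z) \<in> borel_measurable lborel" for n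
      by (intro borel_measurable_times_ennreal borel_measurable_const borel_measurable_indicator) simp
  qed (simp add: ball_integral)
  also have "\<dots> < \<infinity>"
    using ennreal_suminf_neq_top[OF summable_divide[OF gauss_shell_summable[OF v]]] v
    by (simp add: top.not_eq_extremum)
  finally show ?thesis .
qed

lemma cgauss_finite_measure: "0 < v \<Longrightarrow> finite_measure (cgauss v)"
  using cgauss_finite by (intro finite_measureI) (simp add: less_top[symmetric])

lemma cgauss_measure_ball_upper:
  "0 < v \<Longrightarrow> 0 \<le> t \<Longrightarrow> measure (cgauss v) (ball 0 (sqrt t)) \<le> t / v"
  using cgauss_ball_upper[of v "sqrt t"]
  by (simp add: finite_measure.emeasure_eq_measure[OF cgauss_finite_measure])

lemma cgauss_measure_ball_lower:
  "0 < v \<Longrightarrow> 0 \<le> t \<Longrightarrow> t \<le> v \<Longrightarrow> exp (-1) * t / v \<le> measure (cgauss v) (ball 0 (sqrt t))"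
  using cgauss_ball_lower[of v "sqrt t"]
  by (simp add: finite_measure.emeasure_eq_measure[OF cgauss_finite_measure])

lemma cgauss_total_pos: "0 < v \<Longrightarrow> 0 < measure (cgauss v) UNIV"
  using cgauss_measure_ball_lower[of v v] finite_measure.finite_measure_mono[OF cgauss_finite_measure, of v "ball 0 (sqrt v)" UNIV]
  by (smt (verit) divide_pos_pos exp_gt_zero mult_pos_pos sets.top space_cgauss subset_UNIV)

lemma UNIV_link: "(UNIV :: link set) = {S_R1, S_R2, S_D, R1_R2, R1_D, R2_R1, R2_D}"
  using link.exhaust by auto

lemma finite_link[simp]: "finite (UNIV :: link set)"
  by (simp add: UNIV_link)

definition gain_box :: "link set \<Rightarrow> (link \<Rightarrow> real) \<Rightarrow> (link \<Rightarrow> complex) set" where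
  "gain_box L t = PiE UNIV (\<lambda>l. if l \<in> L then ball 0 (sqrt (t l)) else UNIV)"

lemma mem_gain_box: "g \<in> gain_box L t \<longleftrightarrow> (\<forall>l\<in>L. (cmod (g l))\<^sup>2 < t l)"
proof -
  have ball: "z \<in> ball 0 (sqrt u) \<longleftrightarrow> (cmod z)\<^sup>2 < u" for z :: complex and u
  proof -
    have "z \<in> ball 0 (sqrt u) \<longleftrightarrow> sqrt ((cmod z)\<^sup>2) < sqrt u" by simp
    also have "\<dots> \<longleftrightarrow> (cmod z)\<^sup>2 < u" by (rule real_sqrt_less_iff)
    finally show ?thesis .
  qed
  show ?thesis
    unfolding gain_box_def PiE_def Pi_def using ball[symmetric] by (auto split: if_splits)
qed

locale channel_gains =
  fixes \<sigma>2 :: "link \<Rightarrow> real"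
  assumes variance_pos: "\<And>l. 0 < \<sigma>2 l"
begin

lemma product_sigma_finite_gains: "product_sigma_finite (\<lambda>l. cgauss (\<sigma>2 l))"
  unfolding product_sigma_finite_def
  using cgauss_finite_measure[OF variance_pos] finite_measure_def by auto

lemma space_gains[simp]: "space (gains_measure \<sigma>2) = UNIV"
  unfolding gains_measure_def by (simp add: space_PiM PiE_def extensional_def)

lemma gain_box_sets[measurable]: "gain_box L t \<in> sets (gains_measure \<sigma>2)"
  unfolding gains_measure_def gain_box_def by (intro sets_PiM_I_finite) auto

lemma gain_component_measurable[measurable]: "(\<lambda>g. g l) \<in> borel_measurable (gains_measure \<sigma>2)"
proof -
  have "(\<lambda>g. g l) \<in> measurable (gains_measure \<sigma>2) (cgauss (\<sigma>2 l))"
    unfolding gains_measure_def by (rule measurable_component_singleton) simp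
  then show ?thesis by (simp cong: measurable_cong_sets)
qed

lemma emeasure_gain_box: "emeasure (gains_measure \<sigma>2) (gain_box L t) =
   ennreal (\<Prod>l\<in>UNIV. measure (cgauss (\<sigma>2 l)) (if l \<in> L then ball 0 (sqrt (t l)) else UNIV))"
proof -
  have "emeasure (gains_measure \<sigma>2) (gain_box L t)
      = (\<Prod>l\<in>UNIV. emeasure (cgauss (\<sigma>2 l)) (if l \<in> L then ball 0 (sqrt (t l)) else UNIV))"
    unfolding gains_measure_def gain_box_def
    by (rule product_sigma_finite.emeasure_PiM[OF product_sigma_finite_gains]) auto
  then show ?thesis
    by (simp add: finite_measure.emeasure_eq_measure[OF cgauss_finite_measure[OF variance_pos]] prod_ennreal)
qed

lemma measure_gain_box: "measure (gains_measure \<sigma>2) (gain_box L t) =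
   (\<Prod>l\<in>UNIV. measure (cgauss (\<sigma>2 l)) (if l \<in> L then ball 0 (sqrt (t l)) else UNIV))"
  unfolding measure_def emeasure_gain_box by (simp add: prod_nonneg)

lemma finite_measure_gains: "finite_measure (gains_measure \<sigma>2)"
proof (rule finite_measureI)
  have "gain_box {} (\<lambda>_. 0) = space (gains_measure \<sigma>2)"
    by (simp add: gain_box_def PiE_def extensional_def)
  moreover have "emeasure (gains_measure \<sigma>2) (gain_box {} (\<lambda>_. 0)) \<noteq> \<infinity>"
    by (simp add: emeasure_gain_box)
  ultimately show "emeasure (gains_measure \<sigma>2) (space (gains_measure \<sigma>2)) \<noteq> \<infinity>"
    by metis
qed

definition box_const :: "link set \<Rightarrow> real" where
  "box_const L = (\<Prod>l\<in>UNIV. if l \<in> L then 1 / \<sigma>2 l else measure (cgauss (\<sigma>2 l)) UNIV)"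

lemma box_const_pos: "0 < box_const L"
  unfolding box_const_def using variance_pos cgauss_total_pos[OF variance_pos] by (intro prod_pos) auto

lemma prod_if_in:
  fixes f g :: "link \<Rightarrow> real"
  shows "(\<Prod>l\<in>UNIV. if l \<in> L then f l * g l else g l) = (\<Prod>l\<in>L. f l) * (\<Prod>l\<in>UNIV. g l)"
proof -
  have "(\<Prod>l\<in>UNIV. if l \<in> L then f l * g l else g l) = (\<Prod>l\<in>UNIV. (if l \<in> L then f l else 1) * g l)"
    by (intro prod.cong) auto
  also have "\<dots> = (\<Prod>l\<in>UNIV. if l \<in> L then f l else 1) * (\<Prod>l\<in>UNIV. g l)"
    by (rule prod.distrib)
  finally show ?thesis by (simp add: prod.If_cases)
qed

lemma gain_box_upper:
  assumes "\<And>l. l \<in> L \<Longrightarrow> 0 \<le> t l"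
  shows "measure (gains_measure \<sigma>2) (gain_box L t) \<le> (\<Prod>l\<in>L. t l) * box_const L"
proof -
  have "measure (gains_measure \<sigma>2) (gain_box L t)
      \<le> (\<Prod>l\<in>UNIV. if l \<in> L then t l * (1 / \<sigma>2 l) else measure (cgauss (\<sigma>2 l)) UNIV)"
    unfolding measure_gain_box
  proof (intro prod_mono conjI)
    fix l
    show "measure (cgauss (\<sigma>2 l)) (if l \<in> L then ball 0 (sqrt (t l)) else UNIV)
        \<le> (if l \<in> L then t l * (1 / \<sigma>2 l) else measure (cgauss (\<sigma>2 l)) UNIV)"
      using cgauss_measure_ball_upper[OF variance_pos assms, of l l] by auto
  qed simp
  also have "\<dots> = (\<Prod>l\<in>L. t l) * box_const L"
    unfolding box_const_def prod_if_in[symmetric] by (intro prod.cong) auto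
  finally show ?thesis .
qed

lemma gain_box_lower:
  assumes "\<And>l. l \<in> L \<Longrightarrow> 0 \<le> t l \<and> t l \<le> \<sigma>2 l"
  shows "exp (-1) ^ card L * (\<Prod>l\<in>L. t l) * box_const L \<le> measure (gains_measure \<sigma>2) (gain_box L t)"
proof -
  have factor: "exp (-1) ^ card L * (\<Prod>l\<in>L. t l) = (\<Prod>l\<in>L. exp (-1) * t l)"
    by (simp add: prod.distrib)
  have "exp (-1) ^ card L * (\<Prod>l\<in>L. t l) * box_const L
      = (\<Prod>l\<in>UNIV. if l \<in> L then exp (-1) * t l * (1 / \<sigma>2 l) else measure (cgauss (\<sigma>2 l)) UNIV)"
    unfolding box_const_def factor prod_if_in[symmetric] by (intro prod.cong) auto
  also have "\<dots> \<le> measure (gains_measure \<sigma>2) (gain_box L t)"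
    unfolding measure_gain_box
  proof (intro prod_mono conjI)
    fix l
    show "0 \<le> (if l \<in> L then exp (-1) * t l * (1 / \<sigma>2 l) else measure (cgauss (\<sigma>2 l)) UNIV)"
      using assms[of l] variance_pos[of l] by auto
    show "(if l \<in> L then exp (-1) * t l * (1 / \<sigma>2 l) else measure (cgauss (\<sigma>2 l)) UNIV)
        \<le> measure (cgauss (\<sigma>2 l)) (if l \<in> L then ball 0 (sqrt (t l)) else UNIV)"
      using cgauss_measure_ball_lower[OF variance_pos, of "t l" l] assms[of l] by auto
  qed
  finally show ?thesis .
qed

end

lemma log2_less_twice_rate: "0 \<le> y \<Longrightarrow> log 2 (1 + y) < 2 * R \<longleftrightarrow> y < 2 powr (2 * R) - 1"
  by (subst log_less_iff) auto

definition gain_threshold :: "real \<Rightarrow> real \<Rightarrow> real" where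
  "gain_threshold \<rho> R = (2 powr (2 * R) - 1) / \<rho>"

lemma gain_threshold_pos: "0 < \<rho> \<Longrightarrow> 0 < R \<Longrightarrow> 0 < gain_threshold \<rho> R"
  unfolding gain_threshold_def by simp

lemma not_decodes_iff:
  assumes "0 < \<rho>"
  shows "\<not> decodes \<rho> R a \<longleftrightarrow> (cmod a)\<^sup>2 < gain_threshold \<rho> R"
proof -
  have "\<not> decodes \<rho> R a \<longleftrightarrow> log 2 (1 + \<rho> * (cmod a)\<^sup>2) < 2 * R"
    unfolding decodes_def by auto
  also have "\<dots> \<longleftrightarrow> \<rho> * (cmod a)\<^sup>2 < 2 powr (2 * R) - 1"
    using assms by (intro log2_less_twice_rate) simp
  also have "\<dots> \<longleftrightarrow> (cmod a)\<^sup>2 < gain_threshold \<rho> R"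
    unfolding gain_threshold_def using assms by (simp add: pos_less_divide_eq mult.commute)
  finally show ?thesis .
qed

lemma capacity_below_rate:
  assumes "0 < \<rho>" "0 < c" "log 2 (1 + \<rho> * (cmod a)\<^sup>2 * c) < 2 * R"
  shows "(cmod a)\<^sup>2 < gain_threshold \<rho> R / c"
  using assms log2_less_twice_rate[of "\<rho> * (cmod a)\<^sup>2 * c" R]
  unfolding gain_threshold_def by (simp add: field_simps)

text \<open>The four outage patterns, one per decoding set: the direct link is always weak, and
  each of the two relays has either a weak source link or (if it decodes) a weak relay link.\<close>

definition outage_patterns :: "link set set" where
  "outage_patterns = {{S_D, S_R1, S_R2}, {S_D, R1_D, S_R2}, {S_D, R2_D, S_R1}, {S_D, R1_D, R2_D}}"

lemma card_outage_patterns: "L \<in> outage_patterns \<Longrightarrow> card L = 3"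
  unfolding outage_patterns_def by auto

locale stc_scheme = admissible_waveform s Ts \<tau> + channel_gains \<sigma>2
  for s :: "real \<Rightarrow> real" and Ts \<tau> :: real and \<sigma>2 :: "link \<Rightarrow> real"
begin

definition outage_event :: "real \<Rightarrow> real \<Rightarrow> (link \<Rightarrow> complex) set" where
  "outage_event \<rho> R = {g \<in> space (gains_measure \<sigma>2). I_Astc s Ts \<tau> \<rho> R g < R}"

lemma outage_event_sets: "outage_event \<rho> R \<in> sets (gains_measure \<sigma>2)"
proof -
  have "(\<lambda>g. I_Astc s Ts \<tau> \<rho> R g) \<in> borel_measurable (gains_measure \<sigma>2)"
    unfolding I_Astc_def Let_def decodes_def by measurable
  then show ?thesis unfolding outage_event_def by measurable
qed

text \<open>In outage each term present in \<open>I\<^sub>A\<^sub>-\<^sub>s\<^sub>t\<^sub>c\<close> is below \<open>2R\<close>, because all terms are nonnegative.\<close>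

lemma outage_terms_below_rate:
  assumes \<rho>: "0 \<le> \<rho>" and out: "I_Astc s Ts \<tau> \<rho> R g < R"
  shows "I_ESD s Ts \<tau> \<rho> (g S_D) < 2 * R"
    and "decodes \<rho> R (g S_R1) \<Longrightarrow> decodes \<rho> R (g S_R2) \<Longrightarrow> I_EMacA s Ts \<tau> \<rho> (g R1_D) (g R2_D) < 2 * R"
    and "decodes \<rho> R (g S_R1) \<Longrightarrow> \<not> decodes \<rho> R (g S_R2) \<Longrightarrow> I_ESD s Ts \<tau> \<rho> (g R1_D) < 2 * R"
    and "\<not> decodes \<rho> R (g S_R1) \<Longrightarrow> decodes \<rho> R (g S_R2) \<Longrightarrow> I_ESD s Ts \<tau> \<rho> (g R2_D) < 2 * R"
  using out I_ESD_nonneg[OF \<rho>, of "g S_D"] I_ESD_nonneg[OF \<rho>, of "g R1_D"] I_ESD_nonneg[OF \<rho>, of "g R2_D"]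
    I_EMacA_nonneg[OF \<rho>, of "g R1_D" "g R2_D"]
  by (auto simp: I_Astc_def Let_def split: if_splits)

lemma I_ESD_below_rate_gain:
  assumes \<rho>: "0 < \<rho>" and "I_ESD s Ts \<tau> \<rho> a < 2 * R"
  shows "(cmod a)\<^sup>2 < gain_threshold \<rho> R / T11_min"
  using assms I_ESD_bounds(1)[of \<rho> a] capacity_below_rate[OF \<rho> T11_min_pos, of a R] by simp

lemma I_EMacA_below_rate_gains:
  assumes \<rho>: "0 < \<rho>" and "I_EMacA s Ts \<tau> \<rho> a1 a2 < 2 * R"
  shows "(cmod a1)\<^sup>2 < gain_threshold \<rho> R / T11_min" "(cmod a2)\<^sup>2 < gain_threshold \<rho> R / T11_min"
  using assms I_EMacA_lower[of \<rho> a1 a2] I_EMacA_lower[of \<rho> a2 a1] I_EMacA_sym[of \<rho> a1 a2]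
    capacity_below_rate[OF \<rho> T11_min_pos] by (simp_all add: order_le_less_trans)

lemma undecoded_gain:
  assumes \<rho>: "0 < \<rho>" and R: "0 < R" and "\<not> decodes \<rho> R a"
  shows "(cmod a)\<^sup>2 < gain_threshold \<rho> R / T11_min"
proof -
  have "gain_threshold \<rho> R * T11_min \<le> gain_threshold \<rho> R"
    using T11_min_le_1 gain_threshold_pos[OF \<rho> R] by (simp add: mult_left_le)
  then have "gain_threshold \<rho> R \<le> gain_threshold \<rho> R / T11_min"
    using T11_min_pos by (simp add: pos_le_divide_eq)
  then show ?thesis using assms(3) not_decodes_iff[OF \<rho>] by fastforce
qed

lemma outage_subset_patterns:
  assumes \<rho>: "0 < \<rho>" and R: "0 < R"
  shows "outage_event \<rho> R \<subseteq> (\<Union>L\<in>outage_patterns. gain_box L (\<lambda>_. gain_threshold \<rho> R / T11_min))"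
proof
  fix g assume "g \<in> outage_event \<rho> R"
  then have out: "I_Astc s Ts \<tau> \<rho> R g < R" by (simp add: outage_event_def)
  define w where "w = gain_threshold \<rho> R / T11_min"
  note below = outage_terms_below_rate[OF less_imp_le[OF \<rho>] out]
  note undecoded = undecoded_gain[OF \<rho> R, folded w_def]
  have direct: "(cmod (g S_D))\<^sup>2 < w"
    using I_ESD_below_rate_gain[OF \<rho> below(1)] by (simp add: w_def)
  consider (both) "decodes \<rho> R (g S_R1)" "decodes \<rho> R (g S_R2)"
    | (first) "decodes \<rho> R (g S_R1)" "\<not> decodes \<rho> R (g S_R2)"
    | (second) "\<not> decodes \<rho> R (g S_R1)" "decodes \<rho> R (g S_R2)"
    | (none) "\<not> decodes \<rho> R (g S_R1)" "\<not> decodes \<rho> R (g S_R2)"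
    by blast
  then have "\<exists>L\<in>outage_patterns. \<forall>l\<in>L. (cmod (g l))\<^sup>2 < w"
  proof cases
    case both
    then show ?thesis
      using direct I_EMacA_below_rate_gains[OF \<rho> below(2)[OF both]] unfolding outage_patterns_def w_def
      by (intro bexI[of _ "{S_D, R1_D, R2_D}"]) auto
  next
    case first
    then show ?thesis
      using direct I_ESD_below_rate_gain[OF \<rho> below(3)[OF first]] undecoded[OF first(2)]
      unfolding outage_patterns_def w_def by (intro bexI[of _ "{S_D, R1_D, S_R2}"]) auto
  next
    case second
    then show ?thesis
      using direct I_ESD_below_rate_gain[OF \<rho> below(4)[OF second]] undecoded[OF second(1)]
      unfolding outage_patterns_def w_def by (intro bexI[of _ "{S_D, R2_D, S_R1}"]) auto
  next
    case none
    then show ?thesis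
      using direct undecoded[OF none(1)] undecoded[OF none(2)] unfolding outage_patterns_def
      by (intro bexI[of _ "{S_D, S_R1, S_R2}"]) auto
  qed
  then show "g \<in> (\<Union>L\<in>outage_patterns. gain_box L (\<lambda>_. gain_threshold \<rho> R / T11_min))"
    by (simp add: mem_gain_box w_def)
qed

lemma weak_box_subset_outage:
  assumes \<rho>: "0 < \<rho>"
  shows "gain_box {S_D, S_R1, S_R2} (\<lambda>l. if l = S_D then gain_threshold \<rho> R / 2 else gain_threshold \<rho> R)
    \<subseteq> outage_event \<rho> R"
proof
  fix g assume "g \<in> gain_box {S_D, S_R1, S_R2} (\<lambda>l. if l = S_D then gain_threshold \<rho> R / 2 else gain_threshold \<rho> R)"
  then have small: "(cmod (g S_D))\<^sup>2 < gain_threshold \<rho> R / 2"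
    "(cmod (g S_R1))\<^sup>2 < gain_threshold \<rho> R" "(cmod (g S_R2))\<^sup>2 < gain_threshold \<rho> R"
    unfolding mem_gain_box by auto
  have "I_ESD s Ts \<tau> \<rho> (g S_D) \<le> log 2 (1 + \<rho> * (cmod (g S_D))\<^sup>2 * 2)"
    using \<rho> by (intro I_ESD_bounds(2)) simp
  also have "\<dots> < 2 * R"
    using small(1) \<rho>
    by (subst log2_less_twice_rate) (auto simp: gain_threshold_def field_simps)
  moreover have "\<not> decodes \<rho> R (g S_R1)" "\<not> decodes \<rho> R (g S_R2)"
    using small(2,3) not_decodes_iff[OF \<rho>] by auto
  ultimately show "g \<in> outage_event \<rho> R"
    by (simp add: outage_event_def I_Astc_def Let_def)
qed

text \<open>Outage probability is of order \<open>t\<^sup>3\<close>, where \<open>t\<close> is the gain threshold: three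
  independent links must fade at once.\<close>

definition outage_upper_const :: real where
  "outage_upper_const = (\<Sum>L\<in>outage_patterns. box_const L) / T11_min ^ 3"

definition outage_lower_const :: real where
  "outage_lower_const = exp (-1) ^ 3 / 2 * box_const {S_D, S_R1, S_R2}"

lemma outage_upper_const_pos: "0 < outage_upper_const"
  unfolding outage_upper_const_def using box_const_pos T11_min_pos
  by (intro divide_pos_pos sum_pos) (auto simp: outage_patterns_def)

lemma outage_lower_const_pos: "0 < outage_lower_const"
  unfolding outage_lower_const_def using box_const_pos by simp

lemma outage_prob_upper:
  assumes \<rho>: "0 < \<rho>" and R: "0 < R"
  shows "measure (gains_measure \<sigma>2) (outage_event \<rho> R) \<le> outage_upper_const * gain_threshold \<rho> R ^ 3"
proof -
  interpret finite_measure "gains_measure \<sigma>2" by (rule finite_measure_gains)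
  define w where "w = gain_threshold \<rho> R / T11_min"
  have w: "0 \<le> w"
    unfolding w_def using gain_threshold_pos[OF \<rho> R] T11_min_pos by simp
  have "measure (gains_measure \<sigma>2) (outage_event \<rho> R)
      \<le> measure (gains_measure \<sigma>2) (\<Union>L\<in>outage_patterns. gain_box L (\<lambda>_. w))"
    using outage_subset_patterns[OF \<rho> R] unfolding w_def
    by (intro finite_measure_mono) (auto simp: outage_patterns_def)
  also have "\<dots> \<le> (\<Sum>L\<in>outage_patterns. measure (gains_measure \<sigma>2) (gain_box L (\<lambda>_. w)))"
    by (intro finite_measure_subadditive_finite) (auto simp: outage_patterns_def)
  also have "\<dots> \<le> (\<Sum>L\<in>outage_patterns. w ^ 3 * box_const L)"
  proof (rule sum_mono)
    fix L assume "L \<in> outage_patterns"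
    then have "(\<Prod>l\<in>L. w) = w ^ 3" using card_outage_patterns by simp
    then show "measure (gains_measure \<sigma>2) (gain_box L (\<lambda>_. w)) \<le> w ^ 3 * box_const L"
      using gain_box_upper[of L "\<lambda>_. w"] w by simp
  qed
  also have "\<dots> = outage_upper_const * gain_threshold \<rho> R ^ 3"
    unfolding outage_upper_const_def w_def sum_distrib_left[symmetric] by (simp add: power_divide)
  finally show ?thesis .
qed

lemma outage_prob_lower:
  assumes \<rho>: "0 < \<rho>" and R: "0 < R"
    and small: "\<And>l. l \<in> {S_D, S_R1, S_R2} \<Longrightarrow> gain_threshold \<rho> R \<le> \<sigma>2 l"
  shows "outage_lower_const * gain_threshold \<rho> R ^ 3 \<le> measure (gains_measure \<sigma>2) (outage_event \<rho> R)"
proof -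
  interpret finite_measure "gains_measure \<sigma>2" by (rule finite_measure_gains)
  define t where "t = gain_threshold \<rho> R"
  define u where "u l = (if l = S_D then t / 2 else t)" for l
  have t: "0 < t" unfolding t_def using gain_threshold_pos[OF \<rho> R] .
  have "outage_lower_const * t ^ 3 = exp (-1) ^ card {S_D, S_R1, S_R2} * (\<Prod>l\<in>{S_D, S_R1, S_R2}. u l) * box_const {S_D, S_R1, S_R2}"
    unfolding outage_lower_const_def u_def by (simp add: power3_eq_cube)
  also have "\<dots> \<le> measure (gains_measure \<sigma>2) (gain_box {S_D, S_R1, S_R2} u)"
    using small[of S_D] small[of S_R1] small[of S_R2] variance_pos[of S_D] t
    unfolding t_def[symmetric] u_def by (intro gain_box_lower) auto
  also have "\<dots> \<le> measure (gains_measure \<sigma>2) (outage_event \<rho> R)"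
    using weak_box_subset_outage[OF \<rho>, of R] outage_event_sets
    unfolding u_def t_def by (intro finite_measure_mono) auto
  finally show ?thesis unfolding t_def .
qed

lemma outage_prob_bounds:
  assumes SNR: "0 < SNR" and r: "0 < r"
  defines "t \<equiv> gain_threshold (rho0 SNR) (rate \<sigma>2 r SNR)"
  shows "0 < t"
    and "outage_prob s Ts \<tau> \<sigma>2 r SNR \<le> outage_upper_const * t ^ 3"
    and "\<forall>l\<in>{S_D, S_R1, S_R2}. t \<le> \<sigma>2 l \<Longrightarrow> outage_lower_const * t ^ 3 \<le> outage_prob s Ts \<tau> \<sigma>2 r SNR"
proof -
  have \<rho>: "0 < rho0 SNR" using SNR by (simp add: rho0_def)
  have "1 < 1 + SNR * \<sigma>2 S_D" using SNR variance_pos[of S_D] by simp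
  then have "0 < log 2 (1 + SNR * \<sigma>2 S_D)" by simp
  then have R: "0 < rate \<sigma>2 r SNR" using r by (simp add: rate_def)
  have P: "outage_prob s Ts \<tau> \<sigma>2 r SNR = measure (gains_measure \<sigma>2) (outage_event (rho0 SNR) (rate \<sigma>2 r SNR))"
    unfolding outage_prob_def outage_event_def ..
  show "0 < t"
    unfolding t_def by (rule gain_threshold_pos[OF \<rho> R])
  show "outage_prob s Ts \<tau> \<sigma>2 r SNR \<le> outage_upper_const * t ^ 3"
    unfolding P t_def by (rule outage_prob_upper[OF \<rho> R])
  show "outage_lower_const * t ^ 3 \<le> outage_prob s Ts \<tau> \<sigma>2 r SNR"
    if "\<forall>l\<in>{S_D, S_R1, S_R2}. t \<le> \<sigma>2 l"
    unfolding P t_def by (rule outage_prob_lower[OF \<rho> R]) (use that in \<open>auto simp: t_def\<close>)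
qed

end

lemma gain_threshold_at_SNR:
  assumes "0 < SNR" "0 < \<sigma>2 S_D"
  shows "gain_threshold (rho0 SNR) (rate \<sigma>2 r SNR) = ((1 + SNR * \<sigma>2 S_D) powr (2 * r) - 1) / (2 / 3 * SNR)"
proof -
  have "(2::real) powr (2 * (r * log 2 (1 + SNR * \<sigma>2 S_D)))
      = (2 powr (log 2 (1 + SNR * \<sigma>2 S_D))) powr (2 * r)"
    by (simp add: powr_powr algebra_simps)
  also have "\<dots> = (1 + SNR * \<sigma>2 S_D) powr (2 * r)"
    using assms by (simp add: add_pos_pos)
  finally show ?thesis
    unfolding gain_threshold_def rho0_def rate_def by simp
qed

lemma gain_threshold_asymptotics:
  assumes \<sigma>: "0 < \<sigma>2 S_D" and r: "0 < r" "r < 1 / 2"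
  shows "((\<lambda>S. gain_threshold (rho0 S) (rate \<sigma>2 r S)) \<longlongrightarrow> 0) at_top"
    and "((\<lambda>S. - ln (gain_threshold (rho0 S) (rate \<sigma>2 r S)) / ln S) \<longlongrightarrow> 1 - 2 * r) at_top"
proof -
  define f where "f S = ((1 + S * \<sigma>2 S_D) powr (2 * r) - 1) / (2 / 3 * S)" for S
  have eq: "\<forall>\<^sub>F S in at_top. f S = gain_threshold (rho0 S) (rate \<sigma>2 r S)"
    using eventually_gt_at_top[of 0] by eventually_elim (simp add: f_def gain_threshold_at_SNR \<sigma>)
  have "(f \<longlongrightarrow> 0) at_top" "((\<lambda>S. - ln (f S) / ln S) \<longlongrightarrow> 1 - 2 * r) at_top"
    unfolding f_def using \<sigma> r by real_asymp+
  moreover have "\<forall>\<^sub>F S in at_top. - ln (f S) / ln S = - ln (gain_threshold (rho0 S) (rate \<sigma>2 r S)) / ln S"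
    using eq by eventually_elim simp
  ultimately show "((\<lambda>S. gain_threshold (rho0 S) (rate \<sigma>2 r S)) \<longlongrightarrow> 0) at_top"
    and "((\<lambda>S. - ln (gain_threshold (rho0 S) (rate \<sigma>2 r S)) / ln S) \<longlongrightarrow> 1 - 2 * r) at_top"
    using eq by (auto elim!: tendsto_cong[THEN iffD1, rotated])
qed

lemma exponent_sandwich:
  fixes P t :: "real \<Rightarrow> real" and a b e :: real and n :: nat
  assumes a: "0 < a" and b: "0 < b"
    and bounds: "\<forall>\<^sub>F S in at_top. 0 < t S \<and> a * t S ^ n \<le> P S \<and> P S \<le> b * t S ^ n"
    and exponent: "((\<lambda>S. - ln (t S) / ln S) \<longlongrightarrow> e) at_top"
  shows "((\<lambda>S. - ln (P S) / ln S) \<longlongrightarrow> real n * e) at_top"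
proof -
  define f where "f c S = (- ln c - real n * ln (t S)) / ln S" for c S
  have lim: "(f c \<longlongrightarrow> real n * e) at_top" for c
  proof -
    have "f c = (\<lambda>S. - ln c / ln S + real n * (- ln (t S) / ln S))"
      unfolding f_def by (auto simp: diff_divide_distrib)
    moreover have "((\<lambda>S. - ln c / ln S) \<longlongrightarrow> 0) at_top"
      by (intro tendsto_divide_0[OF tendsto_const] filterlim_at_top_imp_at_infinity ln_at_top)
    ultimately show ?thesis
      using tendsto_add[OF _ tendsto_mult[OF tendsto_const exponent]] by fastforce
  qed
  have "\<forall>\<^sub>F S in at_top. f b S \<le> - ln (P S) / ln S \<and> - ln (P S) / ln S \<le> f a S"
    using bounds eventually_gt_at_top[of 1]
  proof eventually_elim
    case (elim S)
    then have t: "0 < t S" and P: "0 < P S" and lnS: "0 < ln S"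
      using a by (auto intro: less_le_trans[of 0 "a * t S ^ n"])
    have "ln (P S) \<le> ln (b * t S ^ n)"
      using elim P b t by (subst ln_le_cancel_iff) auto
    also have "\<dots> = ln b + real n * ln (t S)"
      using b t by (simp add: ln_mult ln_realpow)
    finally have "ln (P S) \<le> ln b + real n * ln (t S)" .
    have "ln a + real n * ln (t S) = ln (a * t S ^ n)"
      using a t by (simp add: ln_mult ln_realpow)
    also have "\<dots> \<le> ln (P S)"
      using elim P a t by (subst ln_le_cancel_iff) auto
    finally have "ln a + real n * ln (t S) \<le> ln (P S)" .
    with \<open>ln (P S) \<le> ln b + real n * ln (t S)\<close> show ?case
      unfolding f_def using lnS by (intro conjI divide_right_mono) linarith+
  qed
  then show ?thesis
    by (intro tendsto_sandwich[OF _ _ lim lim]) (auto elim: eventually_mono)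
qed

theorem theorem9:
  fixes s :: "real \<Rightarrow> real" and Ts \<tau> r :: real and \<sigma>2 :: "link \<Rightarrow> real"
  assumes "\<And>l. \<sigma>2 l > 0"
    and "0 < r" and "r < 1 / 2"
    and "0 < Ts" and "0 < \<tau>" and "\<tau> < Ts"
    and "s \<in> borel_measurable lborel"
    and "\<And>t. t \<notin> {0..2 * Ts} \<Longrightarrow> s t = 0"
    and "integrable lborel (\<lambda>t. (s t)\<^sup>2)"
    and "(LINT t|lborel. (s t)\<^sup>2) = 1"
    and "lin_indep_cond s Ts \<tau> 2"
  shows "((\<lambda>SNR. - ln (outage_prob s Ts \<tau> \<sigma>2 r SNR) / ln SNR) \<longlongrightarrow> 3 * (1 - 2 * r)) at_top"
proof -
  interpret stc_scheme s Ts \<tau> \<sigma>2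
    by unfold_locales (use assms in auto)
  define t where "t SNR = gain_threshold (rho0 SNR) (rate \<sigma>2 r SNR)" for SNR
  note t_zero = gain_threshold_asymptotics(1)[of \<sigma>2 r, OF assms(1) assms(2,3), folded t_def]
  note t_exponent = gain_threshold_asymptotics(2)[of \<sigma>2 r, OF assms(1) assms(2,3), folded t_def]
  txt \<open>For large \<open>SNR\<close> the threshold is below the relevant variances, so both bounds apply.\<close>
  have "\<forall>\<^sub>F S in at_top. t S < \<sigma>2 S_D \<and> t S < \<sigma>2 S_R1 \<and> t S < \<sigma>2 S_R2"
    using order_tendstoD(2)[OF t_zero assms(1)] by (intro eventually_conj)
  then have "\<forall>\<^sub>F S in at_top. 0 < t S \<and> outage_lower_const * t S ^ 3 \<le> outage_prob s Ts \<tau> \<sigma>2 r S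
      \<and> outage_prob s Ts \<tau> \<sigma>2 r S \<le> outage_upper_const * t S ^ 3"
    using eventually_gt_at_top[of 0]
    by eventually_elim (use outage_prob_bounds[OF _ assms(2)] in \<open>auto simp: t_def\<close>)
  from exponent_sandwich[OF outage_lower_const_pos outage_upper_const_pos this t_exponent]
  show ?thesis by simp
qed

end
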